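(* Let $\mathcal{M}=\langle S,\to,L\rangle$ be a labeled transition system and let $B\subseteq S\times S$ be a reduced well-founded skipping relation (RWFSK) on $\mathcal{M}$. Then $B$ is a skipping simulation (SKS) on $\mathcal{M}$.
   Context: A labeled transition system is $\mathcal{M}=\langle S,\to,L\rangle$ where $S$ is a non-empty (possibly infinite) set of states, $\to\subseteq S\times S$ is left-total (every state has a successor), and $L$ is a function with domain $S$. A fullpath is an infinite sequence $\sigma$ of states with $\sigma(i)\to\sigma(i+1)$ for all $i\in\omega$; "$\sigma$ is a fullpath starting at $s$" means additionally $\sigma(0)=s$. $w\to^{+}v$ means there is a finite path $w=v_0\to\cdots\to v_k=v$ with $k\ge1$. Matching: let $\mathit{INC}$ be the set of strictly increasing infinite sequences of natural numbers starting at $0$. For a fullpath $\sigma$ and $\pi\in\mathit{INC}$, the $i$-th segment of $\sigma$ w.r.t. $\pi$ is the finite sequence $\sigma(\pi(i)),\dots,\sigma(\pi(i+1)-1)$. For a relation $B$, fullpaths $\sigma,\delta$ and $\pi,\xi\in\mathit{INC}$, $\mathit{corr}(B,\sigma,\pi,\delta,\xi)$ holds iff for every $i\in\omega$ and every state $s$ in the $i$-th segment of $\sigma$ w.r.t. $\pi$, $sB\delta(\xi(i))$. $\mathit{match}(B,\sigma,\delta)$ holds iff there exist $\pi,\xi\in\mathit{INC}$ with $\mathit{corr}(B,\sigma,\pi,\delta,\xi)$. $B\subseteq S\times S$ is a skipping simulation (SKS) on $\mathcal{M}$ iff for all $s,w$ with $sBw$: (SKS1) $L(s)=L(w)$, and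 (SKS2) for every fullpath $\sigma$ starting at $s$ there is a fullpath $\delta$ starting at $w$ with $\mathit{match}(B,\sigma,\delta)$. $B$ is an RWFSK on $\mathcal{M}$ iff (RWFSK1) for all $s,w$ with $sBw$, $L(s)=L(w)$; and (RWFSK2) there exist a well-founded set $\langle W,\prec\rangle$ and a function $\mathit{rankt}:S\times S\to W$ such that for all $s,u,w\in S$ with $s\to u$ and $sBw$, either (a) $uBw$ and $\mathit{rankt}(u,w)\prec\mathit{rankt}(s,w)$, or (b) there is $v$ with $w\to^{+}v$ and $uBv$. *)

theory Defs
  imports Main
begin

text \<open>A labeled transition system with state type 's (the state set S is UNIV :: 's set,
  nonempty since HOL types are nonempty), transition relation R and labeling L.\<close>

definition left_total :: "('s \<Rightarrow> 's \<Rightarrow> bool) \<Rightarrow> bool" where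
  "left_total R \<longleftrightarrow> (\<forall>s. \<exists>t. R s t)"

definition fullpath :: "('s \<Rightarrow> 's \<Rightarrow> bool) \<Rightarrow> (nat \<Rightarrow> 's) \<Rightarrow> bool" where
  "fullpath R \<sigma> \<longleftrightarrow> (\<forall>i. R (\<sigma> i) (\<sigma> (Suc i)))"

definition plus_path :: "('s \<Rightarrow> 's \<Rightarrow> bool) \<Rightarrow> 's \<Rightarrow> 's \<Rightarrow> bool" where
  "plus_path R w v \<longleftrightarrow> (\<exists>k::nat. k \<ge> 1 \<and> (\<exists>p::nat \<Rightarrow> 's. p 0 = w \<and> p k = v \<and> (\<forall>i<k. R (p i) (p (Suc i)))))"

definition INC :: "(nat \<Rightarrow> nat) set" where
  "INC = {\<pi>. strict_mono \<pi> \<and> \<pi> 0 = 0}"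

definition corr :: "('s \<times> 's) set \<Rightarrow> (nat \<Rightarrow> 's) \<Rightarrow> (nat \<Rightarrow> nat) \<Rightarrow> (nat \<Rightarrow> 's) \<Rightarrow> (nat \<Rightarrow> nat) \<Rightarrow> bool" where
  "corr B \<sigma> \<pi> \<delta> \<xi> \<longleftrightarrow> (\<forall>i j. \<pi> i \<le> j \<and> j < \<pi> (Suc i) \<longrightarrow> (\<sigma> j, \<delta> (\<xi> i)) \<in> B)"

definition match :: "('s \<times> 's) set \<Rightarrow> (nat \<Rightarrow> 's) \<Rightarrow> (nat \<Rightarrow> 's) \<Rightarrow> bool" where
  "match B \<sigma> \<delta> \<longleftrightarrow> (\<exists>\<pi>\<in>INC. \<exists>\<xi>\<in>INC. corr B \<sigma> \<pi> \<delta> \<xi>)"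

definition SKS :: "('s \<Rightarrow> 's \<Rightarrow> bool) \<Rightarrow> ('s \<Rightarrow> 'l) \<Rightarrow> ('s \<times> 's) set \<Rightarrow> bool" where
  "SKS R L B \<longleftrightarrow> (\<forall>s w. (s, w) \<in> B \<longrightarrow>
      L s = L w \<and>
      (\<forall>\<sigma>. fullpath R \<sigma> \<and> \<sigma> 0 = s \<longrightarrow>
         (\<exists>\<delta>. fullpath R \<delta> \<and> \<delta> 0 = w \<and> match B \<sigma> \<delta>)))"

text \<open>RWFSK, with the well-founded set given by the carrier type 'w and a well-founded
  relation W on it (strict order: (x, y) \<in> W means x \<prec> y).  The type 'w is a parameter;
  the existential over the well-founded set becomes a universally quantified type variable in
  an assumption (equivalently an existential).\<close>
definition RWFSK :: "('s \<Rightarrow> 's \<Rightarrow> bool) \<Rightarrow> ('s \<Rightarrow> 'l) \<Rightarrow> ('s \<times> 's) set \<Rightarrow> ('w \<times> 'w) set \<Rightarrow> ('s \<Rightarrow> 's \<Rightarrow> 'w) \<Rightarrow> bool" where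
  "RWFSK R L B W rankt \<longleftrightarrow>
     (\<forall>s w. (s, w) \<in> B \<longrightarrow> L s = L w) \<and>
     wf W \<and>
     (\<forall>s u w. R s u \<and> (s, w) \<in> B \<longrightarrow>
        ((u, w) \<in> B \<and> (rankt u w, rankt s w) \<in> W) \<or>
        (\<exists>v. plus_path R w v \<and> (u, v) \<in> B))"

end

theory Submission
  imports Defs
begin

text \<open>Follow a fullpath \<open>\<sigma>\<close> from a state related to \<open>w\<close>. As long as the
  first alternative of RWFSK applies, \<open>\<sigma>\<close> stays related to \<open>w\<close> while the rank
  decreases, so by well-foundedness the second alternative must eventually apply: \<open>w\<close>
  moves by a nonempty finite path to a state related to the next position of \<open>\<sigma>\<close>.
  Iterating this cuts \<open>\<sigma>\<close> into finite segments, each related to one state of a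
  fullpath \<open>\<delta>\<close> glued together from the nonempty finite paths.\<close>

lemma rwfsk_progress:
  assumes wf: "wf W"
    and step: "\<And>s u w. R s u \<Longrightarrow> (s, w) \<in> B \<Longrightarrow>
      (u, w) \<in> B \<and> (rankt u w, rankt s w) \<in> W \<or> (\<exists>v. plus_path R w v \<and> (u, v) \<in> B)"
    and path: "fullpath R \<sigma>"
    and related: "(\<sigma> j, w) \<in> B"
  shows "\<exists>k v. j < k \<and> plus_path R w v \<and> (\<sigma> k, v) \<in> B \<and> (\<forall>i\<in>{j..<k}. (\<sigma> i, w) \<in> B)"
  using wf related
proof (induction "rankt (\<sigma> j) w" arbitrary: j rule: wf_induct_rule)
  case less
  have "R (\<sigma> j) (\<sigma> (Suc j))"
    using path by (simp add: fullpath_def)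
  from step[OF this less.prems] show ?case
  proof
    assume "(\<sigma> (Suc j), w) \<in> B \<and> (rankt (\<sigma> (Suc j)) w, rankt (\<sigma> j) w) \<in> W"
    with less.hyps obtain k v where "Suc j < k" "plus_path R w v" "(\<sigma> k, v) \<in> B"
        and "\<forall>i\<in>{Suc j..<k}. (\<sigma> i, w) \<in> B"
      by blast
    moreover have "{j..<k} = insert j {Suc j..<k}"
      using \<open>Suc j < k\<close> by auto
    ultimately show ?case
      using less.prems by (intro exI[of _ k] exI[of _ v]) auto
  next
    assume "\<exists>v. plus_path R w v \<and> (\<sigma> (Suc j), v) \<in> B"
    then show ?case
      using less.prems by (intro exI[of _ "Suc j"]) auto
  qed
qed

lemma strict_mono_segment_ex1:
  fixes X :: "nat \<Rightarrow> nat"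
  assumes mono: "strict_mono X" and zero: "X 0 = 0"
  shows "\<exists>!n. X n \<le> i \<and> i < X (Suc n)"
proof (rule ex_ex1I)
  show "\<exists>n. X n \<le> i \<and> i < X (Suc n)"
  proof (induction i)
    case 0
    show ?case
      using strict_monoD[OF mono, of 0 "Suc 0"] zero by (intro exI[of _ 0]) simp
  next
    case (Suc i)
    then obtain n where n: "X n \<le> i" "i < X (Suc n)"
      by blast
    show ?case
    proof (cases "Suc i < X (Suc n)")
      case True
      with n show ?thesis by (intro exI[of _ n]) simp
    next
      case False
      with n have "Suc i = X (Suc n)"
        by simp
      moreover have "X (Suc n) < X (Suc (Suc n))"
        using mono by (simp add: strict_mono_def)
      ultimately show ?thesis
        by (intro exI[of _ "Suc n"]) simp
    qed
  qed
next
  fix n n'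
  assume "X n \<le> i \<and> i < X (Suc n)" "X n' \<le> i \<and> i < X (Suc n')"
  then have "\<not> X (Suc n) \<le> X n'" "\<not> X (Suc n') \<le> X n"
    by linarith+
  then show "n = n'"
    unfolding strict_mono_less_eq[OF mono] by simp
qed

lemma fullpath_concat_plus_paths:
  assumes "\<And>n. plus_path R (V n) (V (Suc n))"
  shows "\<exists>\<delta> \<xi>. fullpath R \<delta> \<and> \<xi> \<in> INC \<and> (\<forall>n. \<delta> (\<xi> n) = V n)"
proof -
  obtain M P where M: "\<And>n. 1 \<le> M n"
      and P_start: "\<And>n. P n 0 = V n" and P_end: "\<And>n. P n (M n) = V (Suc n)"
      and P_step: "\<And>n i. i < M n \<Longrightarrow> R (P n i) (P n (Suc i))"
    using assms unfolding plus_path_def by metis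
  define X where "X n = (\<Sum>i<n. M i)" for n
  have X_Suc: "X (Suc n) = X n + M n" for n
    by (simp add: X_def)
  have X_mono: "strict_mono X"
    unfolding strict_mono_Suc_iff using M by (simp add: X_Suc Suc_le_eq)
  have X_0: "X 0 = 0"
    by (simp add: X_def)
  note X_segment = strict_mono_segment_ex1[OF X_mono X_0]
  define N where "N i = (THE n. X n \<le> i \<and> i < X (Suc n))" for i
  have N_eq: "N i = n" if "X n \<le> i" "i < X (Suc n)" for n i
    unfolding N_def using that X_segment by (intro the1_equality) auto
  define \<delta> where "\<delta> i = P (N i) (i - X (N i))" for i
  have \<delta>_segment: "\<delta> (X n + j) = P n j" if "j \<le> M n" for n j
  proof (cases "j = M n")
    case True
    have "N (X (Suc n)) = Suc n"
      using X_mono by (intro N_eq) (auto simp: strict_mono_def)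
    then show ?thesis
      using True by (simp add: \<delta>_def X_Suc[symmetric] P_start P_end)
  next
    case False
    with that have "N (X n + j) = n"
      by (intro N_eq) (simp_all add: X_Suc)
    then show ?thesis
      by (simp add: \<delta>_def)
  qed
  have "fullpath R \<delta>"
    unfolding fullpath_def
  proof
    fix i
    obtain n where n: "X n \<le> i" "i < X (Suc n)"
      using X_segment[of i] by blast
    define j where "j = i - X n"
    have "i = X n + j" "j < M n"
      using n by (simp_all add: j_def X_Suc)
    then show "R (\<delta> i) (\<delta> (Suc i))"
      using \<delta>_segment[of j n] \<delta>_segment[of "Suc j" n] P_step by simp
  qed
  moreover have "\<delta> (X n) = V n" for n
    using \<delta>_segment[of 0 n] by (simp add: P_start)
  moreover have "X \<in> INC"
    using X_mono X_0 by (simp add: INC_def)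
  ultimately show ?thesis
    by blast
qed

lemma match_of_progress:
  assumes progress: "\<And>j w. (\<sigma> j, w) \<in> B \<Longrightarrow>
      \<exists>k v. j < k \<and> plus_path R w v \<and> (\<sigma> k, v) \<in> B \<and> (\<forall>i\<in>{j..<k}. (\<sigma> i, w) \<in> B)"
    and start: "(\<sigma> 0, w) \<in> B"
  shows "\<exists>\<delta>. fullpath R \<delta> \<and> \<delta> 0 = w \<and> match B \<sigma> \<delta>"
proof -
  obtain nxt_k nxt_v where nxt: "\<And>j w. (\<sigma> j, w) \<in> B \<Longrightarrow>
      j < nxt_k j w \<and> plus_path R w (nxt_v j w) \<and> (\<sigma> (nxt_k j w), nxt_v j w) \<in> B
      \<and> (\<forall>i\<in>{j..<nxt_k j w}. (\<sigma> i, w) \<in> B)"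
    using progress by metis
  define st where "st n = ((\<lambda>(j, v). (nxt_k j v, nxt_v j v)) ^^ n) (0, w)" for n
  define J where "J n = fst (st n)" for n
  define V where "V n = snd (st n)" for n
  have J_0: "J 0 = 0" and V_0: "V 0 = w"
    by (simp_all add: J_def V_def st_def)
  have J_Suc: "J (Suc n) = nxt_k (J n) (V n)" and V_Suc: "V (Suc n) = nxt_v (J n) (V n)" for n
    by (simp_all add: J_def V_def st_def split: prod.split)
  have related: "(\<sigma> (J n), V n) \<in> B" for n
    by (induction n) (simp_all add: J_0 V_0 start J_Suc V_Suc nxt)
  have "J \<in> INC"
    using nxt[OF related] by (simp add: INC_def strict_mono_Suc_iff J_Suc J_0)
  obtain \<delta> \<xi> where \<delta>: "fullpath R \<delta>" and \<xi>: "\<xi> \<in> INC" and \<delta>_\<xi>: "\<And>n. \<delta> (\<xi> n) = V n"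
    using fullpath_concat_plus_paths[of R V] nxt[OF related] by (metis V_Suc)
  have "corr B \<sigma> J \<delta> \<xi>"
    unfolding corr_def using nxt[OF related] by (simp add: \<delta>_\<xi> J_Suc)
  with \<open>J \<in> INC\<close> \<xi> have "match B \<sigma> \<delta>"
    unfolding match_def by blast
  moreover have "\<delta> 0 = w"
    using \<delta>_\<xi>[of 0] \<xi> by (simp add: INC_def V_0)
  ultimately show ?thesis
    using \<delta> by blast
qed

theorem theorem2:
  fixes R :: "'s \<Rightarrow> 's \<Rightarrow> bool" and L :: "'s \<Rightarrow> 'l" and B :: "('s \<times> 's) set"
    and W :: "('w \<times> 'w) set" and rankt :: "'s \<Rightarrow> 's \<Rightarrow> 'w"
  assumes "left_total R"
    and "RWFSK R L B W rankt"
  shows "SKS R L B"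
proof -
  have labels: "\<And>s w. (s, w) \<in> B \<Longrightarrow> L s = L w" and wf: "wf W"
    and step: "\<And>s u w. R s u \<Longrightarrow> (s, w) \<in> B \<Longrightarrow>
      (u, w) \<in> B \<and> (rankt u w, rankt s w) \<in> W \<or> (\<exists>v. plus_path R w v \<and> (u, v) \<in> B)"
    using assms(2) unfolding RWFSK_def by blast+
  have "\<exists>\<delta>. fullpath R \<delta> \<and> \<delta> 0 = w \<and> match B \<sigma> \<delta>"
    if "fullpath R \<sigma>" "(\<sigma> 0, w) \<in> B" for \<sigma> w
    using match_of_progress[of \<sigma> B R] rwfsk_progress[OF wf step \<open>fullpath R \<sigma>\<close>] that(2)
    by blast
  with labels show ?thesis
    unfolding SKS_def by blast
qed

end
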